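(* Let $\Gamma\subseteq\mathit{Aff}(2,\mathbb{H})$ be a subgroup acting freely on $\mathbb{H}^2$. Then $\Gamma$ is conjugate in $\mathit{Aff}(2,\mathbb{H})$ to a subgroup of $G_1$ or of $G_2$.
   Context: $\mathit{Aff}(2,\mathbb{H})$ is identified with invertible $3\times3$ quaternionic matrices $\begin{pmatrix} a&b&r\\ c&d&s\\ 0&0&1\end{pmatrix}$ acting on $(x,y)\in\mathbb{H}^2$ by $(x,y)\mapsto(ax+by+r,cx+dy+s)$. $G_1=\left\{\begin{pmatrix} a&b&r\\ 0&1&s\\ 0&0&1\end{pmatrix}: a,b,r,s\in\mathbb{H}, a\neq0\right\}$ and $G_2=\left\{\begin{pmatrix} 1&b&r\\ 0&d&s\\ 0&0&1\end{pmatrix}: b,r,s,d\in\mathbb{H}, d\neq0\right\}$. *)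

theory Defs
  imports Complex_Main "HOL-Algebra.Group"
begin

datatype quat = Quat (Re: real) (Im1: real) (Im2: real) (Im3: real)

lemma quat_eqI: "Re x = Re y \<Longrightarrow> Im1 x = Im1 y \<Longrightarrow> Im2 x = Im2 y \<Longrightarrow> Im3 x = Im3 y \<Longrightarrow> x = y"
  by (cases x; cases y) auto

instantiation quat :: ring_1
begin

definition "0 = Quat 0 0 0 0"
definition "1 = Quat 1 0 0 0"
definition "x + y = Quat (Re x + Re y) (Im1 x + Im1 y) (Im2 x + Im2 y) (Im3 x + Im3 y)"
definition "x - y = Quat (Re x - Re y) (Im1 x - Im1 y) (Im2 x - Im2 y) (Im3 x - Im3 y)"
definition "- x = Quat (- Re x) (- Im1 x) (- Im2 x) (- Im3 x)"
definition "x * y = Quat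
   (Re x * Re y - Im1 x * Im1 y - Im2 x * Im2 y - Im3 x * Im3 y)
   (Re x * Im1 y + Im1 x * Re y + Im2 x * Im3 y - Im3 x * Im2 y)
   (Re x * Im2 y - Im1 x * Im3 y + Im2 x * Re y + Im3 x * Im1 y)
   (Re x * Im3 y + Im1 x * Im2 y - Im2 x * Im1 y + Im3 x * Re y)"

instance
  by intro_classes
     (auto intro!: quat_eqI simp: zero_quat_def one_quat_def plus_quat_def minus_quat_def
        uminus_quat_def times_quat_def algebra_simps)

end

text \<open>An element of Aff(2,H) is the quaternionic 3x3 matrix
  ((a, b, r), (c, d, s), (0, 0, 1)), recorded by its six entries.\<close>

record affm =
  ma :: quat
  mb :: quat
  mc :: quat
  md :: quat
  mr :: quat
  ms :: quat

definition aff_apply :: "affm \<Rightarrow> quat \<times> quat \<Rightarrow> quat \<times> quat" where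
  "aff_apply g p = (ma g * fst p + mb g * snd p + mr g, mc g * fst p + md g * snd p + ms g)"

text \<open>Matrix product of two such 3x3 matrices.\<close>
definition aff_mult :: "affm \<Rightarrow> affm \<Rightarrow> affm" where
  "aff_mult g h = \<lparr> ma = ma g * ma h + mb g * mc h,
                   mb = ma g * mb h + mb g * md h,
                   mc = mc g * ma h + md g * mc h,
                   md = mc g * mb h + md g * md h,
                   mr = ma g * mr h + mb g * ms h + mr g,
                   ms = mc g * mr h + md g * ms h + ms g \<rparr>"

definition aff_one :: affm where
  "aff_one = \<lparr> ma = 1, mb = 0, mc = 0, md = 1, mr = 0, ms = 0 \<rparr>"

definition Aff2H :: "affm set" where
  "Aff2H = {g. \<exists>h. aff_mult g h = aff_one \<and> aff_mult h g = aff_one}"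

definition Aff2H_group :: "affm monoid" where
  "Aff2H_group = \<lparr> carrier = Aff2H, mult = aff_mult, one = aff_one \<rparr>"

definition G1 :: "affm set" where
  "G1 = {g. ma g \<noteq> 0 \<and> mc g = 0 \<and> md g = 1}"

definition G2 :: "affm set" where
  "G2 = {g. ma g = 1 \<and> mc g = 0 \<and> md g \<noteq> 0}"

definition acts_freely :: "affm set \<Rightarrow> bool" where
  "acts_freely \<Gamma> \<longleftrightarrow> (\<forall>g\<in>\<Gamma>. \<forall>p. aff_apply g p = p \<longrightarrow> g = aff_one)"

end

(* If Gamma acts freely, the linear part L of each g in Gamma has the eigenvalue 1: otherwise
   g - id would be invertible and g would have a fixed point. Hence L - I is either zero or a
   rank one map x |-> y f(x). When the product of two such elements again has a fixed vector,
   a direct computation shows that their rank one maps share the kernel of f or the image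
   line y H. Consequently either all L fix a common vector u, or all L - I take values in a
   common line u H. Conjugating by a matrix with first column u moves Gamma into G2 in the
   first case and into G1 in the second. *)

theory Submission
  imports Defs "HOL-Library.Product_Plus"
begin

section \<open>Quaternions form a division ring\<close>

lemma quat_norm_sq_neq_0:
  assumes "(x::quat) \<noteq> 0"
  shows "(Re x)^2 + (Im1 x)^2 + (Im2 x)^2 + (Im3 x)^2 \<noteq> 0"
proof
  assume "(Re x)^2 + (Im1 x)^2 + (Im2 x)^2 + (Im3 x)^2 = 0"
  then have "Re x = 0" "Im1 x = 0" "Im2 x = 0" "Im3 x = 0"
    by (smt (verit) zero_le_power2 power_eq_0_iff zero_neq_numeral)+
  then have "x = 0" by (intro quat_eqI) (auto simp: zero_quat_def)
  with assms show False ..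
qed

instantiation quat :: division_ring
begin

definition inverse_quat :: "quat \<Rightarrow> quat" where
  "inverse_quat x = (let n = (Re x)^2 + (Im1 x)^2 + (Im2 x)^2 + (Im3 x)^2 in
     Quat (Re x / n) (- Im1 x / n) (- Im2 x / n) (- Im3 x / n))"

definition divide_quat :: "quat \<Rightarrow> quat \<Rightarrow> quat" where
  "divide_quat x y = x * inverse y"

instance
proof
  fix a :: quat
  assume "a \<noteq> 0"
  then have n: "(Re a)^2 + (Im1 a)^2 + (Im2 a)^2 + (Im3 a)^2 \<noteq> 0"
    by (rule quat_norm_sq_neq_0)
  show "inverse a * a = 1" "a * inverse a = 1"
    using n by (intro quat_eqI;
        simp add: inverse_quat_def times_quat_def one_quat_def Let_def divide_simps;
        simp add: algebra_simps power2_eq_square)+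
qed (simp_all add: divide_quat_def inverse_quat_def zero_quat_def)

end

section \<open>Two-dimensional linear algebra over a division ring\<close>

text \<open>Vectors of H^2 are pairs scaled from the right, so that matrices act H-linearly from the
  left; linear forms (rows) are pairs scaled from the left.\<close>

definition vscale :: "'a::ring_1 \<times> 'a \<Rightarrow> 'a \<Rightarrow> 'a \<times> 'a" where
  "vscale v \<mu> = (fst v * \<mu>, snd v * \<mu>)"

definition row_apply :: "'a::ring_1 \<times> 'a \<Rightarrow> 'a \<times> 'a \<Rightarrow> 'a" where
  "row_apply f x = fst f * fst x + snd f * snd x"

definition row_scale :: "'a::ring_1 \<Rightarrow> 'a \<times> 'a \<Rightarrow> 'a \<times> 'a" where
  "row_scale \<kappa> f = (\<kappa> * fst f, \<kappa> * snd f)"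

lemma vscale_vscale: "vscale (vscale v \<mu>) \<nu> = vscale v (\<mu> * \<nu>)"
  by (simp add: vscale_def mult.assoc)

lemma vscale_one [simp]: "vscale v 1 = v"
  by (simp add: vscale_def)

lemma vscale_zero_right [simp]: "vscale v 0 = 0"
  by (simp add: vscale_def zero_prod_def)

lemma vscale_add_left: "vscale (v + w) \<mu> = vscale v \<mu> + vscale w \<mu>"
  by (simp add: vscale_def distrib_right)

lemma vscale_add_right: "vscale v (\<mu> + \<nu>) = vscale v \<mu> + vscale v \<nu>"
  by (simp add: vscale_def distrib_left)

lemma vscale_minus_right: "vscale v (- \<mu>) = - vscale v \<mu>"
  by (simp add: vscale_def)

lemma vscale_eq_0_iff [simp]:
  fixes v :: "'a::division_ring \<times> 'a"
  shows "vscale v \<mu> = 0 \<longleftrightarrow> v = 0 \<or> \<mu> = 0"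
  by (cases v) (auto simp: vscale_def zero_prod_def)

lemma row_apply_add: "row_apply f (x + y) = row_apply f x + row_apply f y"
  by (simp add: row_apply_def algebra_simps)

lemma row_apply_vscale: "row_apply f (vscale x \<mu>) = row_apply f x * \<mu>"
  by (simp add: row_apply_def vscale_def algebra_simps)

lemma row_apply_row_scale: "row_apply (row_scale \<kappa> f) x = \<kappa> * row_apply f x"
  by (simp add: row_apply_def row_scale_def algebra_simps)

lemma vscale_linear_independent:
  fixes y z :: "'a::division_ring \<times> 'a"
  assumes y: "y \<noteq> 0" and z: "\<nexists>\<mu>. z = vscale y \<mu>"
    and eq: "vscale y \<alpha> + vscale z \<beta> = 0"
  shows "\<alpha> = 0" "\<beta> = 0"
proof -
  show \<beta>: "\<beta> = 0"
  proof (rule ccontr)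
    assume "\<beta> \<noteq> 0"
    have "z = vscale (vscale z \<beta>) (inverse \<beta>)"
      using \<open>\<beta> \<noteq> 0\<close> by (simp add: vscale_vscale)
    also have "vscale z \<beta> = vscale y (- \<alpha>)"
      using eq by (simp add: vscale_minus_right eq_neg_iff_add_eq_0 add.commute)
    finally have "z = vscale y (- \<alpha> * inverse \<beta>)"
      by (simp add: vscale_vscale)
    with z show False by blast
  qed
  show "\<alpha> = 0"
    using eq y by (simp add: \<beta>)
qed

lemma common_root_imp_left_multiple:
  fixes f g x :: "'a::division_ring \<times> 'a"
  assumes f: "f \<noteq> 0" and x: "x \<noteq> 0"
    and fx: "row_apply f x = 0" and gx: "row_apply g x = 0"
  shows "\<exists>\<kappa>. g = row_scale \<kappa> f"
proof -
  obtain f1 f2 g1 g2 x1 x2 where defs: "f = (f1, f2)" "g = (g1, g2)" "x = (x1, x2)"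
    by (cases f, cases g, cases x)
  have solve: "a1 = - (a2 * x2 * inverse x1)" if "row_apply (a1, a2) x = 0" "x1 \<noteq> 0" for a1 a2
  proof -
    have "a1 * x1 = - (a2 * x2)"
      using that by (simp add: row_apply_def defs eq_neg_iff_add_eq_0)
    then have "a1 * x1 * inverse x1 = - (a2 * x2) * inverse x1" by simp
    then show ?thesis
      using \<open>x1 \<noteq> 0\<close> by (simp add: mult.assoc)
  qed
  show ?thesis
  proof (cases "x1 = 0")
    case True
    with x fx gx have "f2 = 0" "g2 = 0" "x2 \<noteq> 0"
      by (auto simp: defs row_apply_def zero_prod_def)
    with f have "f1 \<noteq> 0" by (simp add: defs zero_prod_def)
    then have "g = row_scale (g1 * inverse f1) f"
      by (simp add: defs row_scale_def \<open>f2 = 0\<close> \<open>g2 = 0\<close> mult.assoc)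
    then show ?thesis ..
  next
    case False
    have f1: "f1 = - (f2 * x2 * inverse x1)" and g1: "g1 = - (g2 * x2 * inverse x1)"
      using solve fx gx False by (simp_all add: defs)
    with f have "f2 \<noteq> 0" by (auto simp: defs zero_prod_def)
    then have "inverse f2 * (f2 * w) = w" for w
      by (simp add: mult.assoc[symmetric])
    with \<open>f2 \<noteq> 0\<close> have "g2 * inverse f2 * f2 = g2" "g2 * inverse f2 * f1 = g1"
      by (simp_all add: f1 g1 mult.assoc)
    then have "g = row_scale (g2 * inverse f2) f"
      by (simp add: defs row_scale_def)
    then show ?thesis ..
  qed
qed

lemma injective_system_solvable_pivot:
  fixes n1 n2 :: "'a::division_ring \<times> 'a"
  assumes inj: "\<And>x. row_apply n1 x = 0 \<Longrightarrow> row_apply n2 x = 0 \<Longrightarrow> x = 0"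
    and pivot: "fst n1 \<noteq> 0"
  shows "\<exists>x. row_apply n1 x = t1 \<and> row_apply n2 x = t2"
proof -
  obtain a b c d where n: "n1 = (a, b)" "n2 = (c, d)"
    by (cases n1, cases n2)
  define k where "k = d - c * inverse a * b"
  \<comment> \<open>k is the Schur complement of the pivot a\<close>
  have "k \<noteq> 0"
  proof
    assume "k = 0"
    then have "row_apply n1 (- (inverse a * b), 1) = 0" "row_apply n2 (- (inverse a * b), 1) = 0"
      using pivot by (simp_all add: n row_apply_def k_def mult.assoc[symmetric])
    from inj[OF this] show False by (simp add: zero_prod_def)
  qed
  define x2 where "x2 = inverse k * (t2 - c * inverse a * t1)"
  define x1 where "x1 = inverse a * (t1 - b * x2)"
  have "row_apply n1 (x1, x2) = t1"
    using pivot by (simp add: n row_apply_def x1_def mult.assoc[symmetric])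
  moreover have "row_apply n2 (x1, x2) = c * inverse a * t1 + k * x2"
    by (simp add: n row_apply_def x1_def k_def algebra_simps)
  then have "row_apply n2 (x1, x2) = t2"
    using \<open>k \<noteq> 0\<close> by (simp add: x2_def mult.assoc[symmetric])
  ultimately show ?thesis by blast
qed

lemma injective_system_solvable:
  fixes n1 n2 :: "'a::division_ring \<times> 'a"
  assumes inj: "\<And>x. row_apply n1 x = 0 \<Longrightarrow> row_apply n2 x = 0 \<Longrightarrow> x = 0"
  shows "\<exists>x. row_apply n1 x = t1 \<and> row_apply n2 x = t2"
proof (cases "fst n1 = 0")
  case True
  have "fst n2 \<noteq> 0"
  proof
    assume "fst n2 = 0"
    with True have "row_apply n1 (1, 0) = 0" "row_apply n2 (1, 0) = 0"
      by (simp_all add: row_apply_def)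
    from inj[OF this] show False by (simp add: zero_prod_def)
  qed
  have "\<exists>x. row_apply n2 x = t2 \<and> row_apply n1 x = t1"
    using inj \<open>fst n2 \<noteq> 0\<close> by (intro injective_system_solvable_pivot) blast+
  then show ?thesis by blast
next
  case False
  with inj show ?thesis by (rule injective_system_solvable_pivot)
qed

lemma aff_mult_assoc: "aff_mult (aff_mult g h) k = aff_mult g (aff_mult h k)"
  by (simp add: aff_mult_def algebra_simps)

lemma aff_mult_one_left [simp]: "aff_mult aff_one g = g"
  by (simp add: aff_mult_def aff_one_def)

lemma Aff2H_I: "aff_mult g h = aff_one \<Longrightarrow> aff_mult h g = aff_one \<Longrightarrow> g \<in> Aff2H"
  by (auto simp: Aff2H_def)

lemma Aff2H_mult_closed:
  assumes "g \<in> Aff2H" "h \<in> Aff2H"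
  shows "aff_mult g h \<in> Aff2H"
proof -
  obtain g' h' where "aff_mult g g' = aff_one" "aff_mult g' g = aff_one"
    "aff_mult h h' = aff_one" "aff_mult h' h = aff_one"
    using assms by (auto simp: Aff2H_def)
  then have "aff_mult (aff_mult g h) (aff_mult h' g') = aff_one"
    "aff_mult (aff_mult h' g') (aff_mult g h) = aff_one"
    by (metis aff_mult_assoc aff_mult_one_left)+
  then show ?thesis by (rule Aff2H_I)
qed

lemma group_Aff2H_group: "group Aff2H_group"
proof (rule groupI)
  fix g assume "g \<in> carrier Aff2H_group"
  then obtain h where "aff_mult g h = aff_one" "aff_mult h g = aff_one"
    by (auto simp: Aff2H_group_def Aff2H_def)
  then show "\<exists>h\<in>carrier Aff2H_group. h \<otimes>\<^bsub>Aff2H_group\<^esub> g = \<one>\<^bsub>Aff2H_group\<^esub>"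
    by (auto simp: Aff2H_group_def intro: Aff2H_I)
qed (auto simp: Aff2H_group_def aff_mult_assoc Aff2H_mult_closed intro: Aff2H_I[of _ aff_one])

lemma Aff2H_inv_eqI:
  assumes "aff_mult g h = aff_one" "aff_mult h g = aff_one"
  shows "inv\<^bsub>Aff2H_group\<^esub> g = h"
  using group.inv_equality[OF group_Aff2H_group, of h g] assms Aff2H_I[of g h] Aff2H_I[of h g]
  by (simp add: Aff2H_group_def)

definition lin_part :: "affm \<Rightarrow> quat \<times> quat \<Rightarrow> quat \<times> quat" where
  "lin_part g x = (row_apply (ma g, mb g) x, row_apply (mc g, md g) x)"

lemma aff_apply_eq_lin_part: "aff_apply g x = lin_part g x + (mr g, ms g)"
  by (simp add: aff_apply_def lin_part_def row_apply_def)

lemma lin_part_mult: "lin_part (aff_mult g h) x = lin_part g (lin_part h x)"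
  by (simp add: lin_part_def aff_mult_def row_apply_def algebra_simps)

lemma lin_part_one [simp]: "lin_part aff_one x = x"
  by (simp add: lin_part_def aff_one_def row_apply_def)

lemma lin_part_add: "lin_part g (x + y) = lin_part g x + lin_part g y"
  by (simp add: lin_part_def row_apply_add)

lemma lin_part_vscale: "lin_part g (vscale x \<mu>) = vscale (lin_part g x) \<mu>"
  by (simp add: lin_part_def row_apply_def vscale_def algebra_simps)

lemma lin_part_e1: "lin_part g (1, 0) = (ma g, mc g)"
  and lin_part_e2: "lin_part g (0, 1) = (mb g, md g)"
  by (simp_all add: lin_part_def row_apply_def)

lemma lin_part_minus_id:
  "lin_part g x - x = (row_apply (ma g - 1, mb g) x, row_apply (mc g, md g - 1) x)"
  by (cases x) (simp add: lin_part_def row_apply_def algebra_simps)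

lemma lin_part_Aff2H_eq_0:
  assumes "g \<in> Aff2H" "lin_part g x = 0"
  shows "x = 0"
proof -
  obtain h where "aff_mult h g = aff_one" using assms(1) by (auto simp: Aff2H_def)
  then have "x = lin_part h (lin_part g x)" by (metis lin_part_mult lin_part_one)
  also have "\<dots> = 0" using assms(2) by (simp add: lin_part_def row_apply_def zero_prod_def)
  finally show ?thesis .
qed

lemma acts_freely_fixed_vector:
  assumes "acts_freely \<Gamma>" "g \<in> \<Gamma>"
  shows "\<exists>u. u \<noteq> 0 \<and> lin_part g u = u"
proof (rule ccontr)
  assume no_fixed: "\<not> ?thesis"
  have "x = 0" if "row_apply (ma g - 1, mb g) x = 0" "row_apply (mc g, md g - 1) x = 0" for x
  proof -
    have "lin_part g x = x"
      using that lin_part_minus_id[of g x] by (simp add: zero_prod_def[symmetric])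
    with no_fixed show ?thesis by blast
  qed
  then obtain x where "row_apply (ma g - 1, mb g) x = - mr g" "row_apply (mc g, md g - 1) x = - ms g"
    using injective_system_solvable by blast
  then have "aff_apply g x = x"
    using lin_part_minus_id[of g x] by (simp add: aff_apply_eq_lin_part prod_eq_iff algebra_simps)
  with assms have "g = aff_one" unfolding acts_freely_def by blast
  then have "lin_part g (1, 0) = (1, 0)" by simp
  moreover have "(1, 0) \<noteq> (0 :: quat \<times> quat)" by (simp add: zero_prod_def)
  ultimately show False using no_fixed by blast
qed

section \<open>Rank one updates of the identity\<close>

definition rank_one_update :: "affm \<Rightarrow> quat \<times> quat \<Rightarrow> quat \<times> quat \<Rightarrow> bool" where
  "rank_one_update g y f \<longleftrightarrow>
     y \<noteq> 0 \<and> f \<noteq> 0 \<and> (\<forall>x. lin_part g x = x + vscale y (row_apply f x))"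

lemma rank_one_update_exists:
  assumes fixed: "lin_part g u = u" and "u \<noteq> 0" and "lin_part g \<noteq> id"
  shows "\<exists>y f. rank_one_update g y f"
proof -
  define r1 where "r1 = (ma g - 1, mb g)"
  define r2 where "r2 = (mc g, md g - 1)"
  have shift: "lin_part g x = x + (row_apply r1 x, row_apply r2 x)" for x
    using lin_part_minus_id[of g x] by (simp add: r1_def r2_def diff_eq_eq add.commute)
  have "row_apply r1 u = 0" "row_apply r2 u = 0"
    using shift[of u] fixed by (simp_all add: zero_prod_def)
  show ?thesis
  proof (cases "r1 = 0")
    case False
    then obtain \<kappa> where "r2 = row_scale \<kappa> r1"
      using common_root_imp_left_multiple \<open>u \<noteq> 0\<close> \<open>row_apply r1 u = 0\<close> \<open>row_apply r2 u = 0\<close>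
      by blast
    then have "rank_one_update g (1, \<kappa>) r1"
      using False by (simp add: rank_one_update_def shift row_apply_row_scale vscale_def zero_prod_def)
    then show ?thesis by blast
  next
    case True
    have "r2 \<noteq> 0"
    proof
      assume "r2 = 0"
      with True have "lin_part g x = x" for x
        by (simp add: shift row_apply_def zero_prod_def)
      with \<open>lin_part g \<noteq> id\<close> show False by auto
    qed
    then have "rank_one_update g (0, 1) r2"
      using True by (simp add: rank_one_update_def shift row_apply_def vscale_def zero_prod_def)
    then show ?thesis by blast
  qed
qed

lemma rank_one_update_apply:
  "rank_one_update g y f \<Longrightarrow> lin_part g x = x + vscale y (row_apply f x)"
  unfolding rank_one_update_def by blast

lemma rank_one_update_nonzero:
  assumes "rank_one_update g y f"
  shows "y \<noteq> 0" "f \<noteq> 0"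
  using assms by (simp_all add: rank_one_update_def)

lemma rank_one_update_fixed_iff:
  assumes "rank_one_update g y f"
  shows "lin_part g u = u \<longleftrightarrow> row_apply f u = 0"
  using assms rank_one_update_nonzero[OF assms] by (simp add: rank_one_update_apply)

lemma rank_one_update_shift_along:
  assumes "rank_one_update g w c" "w = vscale y \<nu>"
  shows "lin_part g x = x + vscale y (\<nu> * row_apply c x)"
  using assms by (simp add: rank_one_update_apply vscale_vscale)

lemma rank_one_updates_share_kernel_or_image:
  assumes g: "rank_one_update g y f" and h: "rank_one_update h z p"
    and fixed: "lin_part (aff_mult g h) x = x" and "x \<noteq> 0"
  shows "(\<exists>\<kappa>. p = row_scale \<kappa> f) \<or> (\<exists>\<mu>. z = vscale y \<mu>)"
proof (rule disjCI)
  assume z: "\<nexists>\<mu>. z = vscale y \<mu>"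
  define P where "P = row_apply p x"
  define F where "F = row_apply f x"
  have "x = lin_part g (lin_part h x)"
    using fixed by (simp add: lin_part_mult)
  also have "\<dots> = x + vscale z P + vscale y (F + row_apply f z * P)"
    using g h by (simp add: rank_one_update_apply P_def F_def lin_part_add lin_part_vscale
        row_apply_add row_apply_vscale vscale_add_left vscale_add_right vscale_vscale add.assoc)
  finally have "vscale y (F + row_apply f z * P) + vscale z P = 0"
    by (simp add: algebra_simps)
  with rank_one_update_nonzero(1)[OF g] z have "F + row_apply f z * P = 0" "P = 0"
    by (rule vscale_linear_independent)+
  then have "F = 0" by simp
  then show "\<exists>\<kappa>. p = row_scale \<kappa> f"
    using common_root_imp_left_multiple rank_one_update_nonzero(2)[OF g] \<open>x \<noteq> 0\<close> \<open>P = 0\<close>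
    by (simp add: P_def F_def)
qed

lemma acts_freely_rank_one_update:
  assumes "acts_freely \<Gamma>" "g \<in> \<Gamma>" "lin_part g \<noteq> id"
  obtains y f where "rank_one_update g y f"
  using acts_freely_fixed_vector[OF assms(1,2)] rank_one_update_exists assms(3) by blast

lemma acts_freely_share_kernel_or_image:
  assumes "acts_freely \<Gamma>" "\<And>g h. g \<in> \<Gamma> \<Longrightarrow> h \<in> \<Gamma> \<Longrightarrow> aff_mult g h \<in> \<Gamma>"
    and "g \<in> \<Gamma>" "h \<in> \<Gamma>" "rank_one_update g y f" "rank_one_update h z p"
  shows "(\<exists>\<kappa>. p = row_scale \<kappa> f) \<or> (\<exists>\<mu>. z = vscale y \<mu>)"
  using acts_freely_fixed_vector[OF assms(1) assms(2)[OF assms(3,4)]] assms(5,6)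
    rank_one_updates_share_kernel_or_image by blast

lemma acts_freely_common_fixed_vector_or_shift_line:
  assumes free: "acts_freely \<Gamma>" and closed: "\<And>g h. g \<in> \<Gamma> \<Longrightarrow> h \<in> \<Gamma> \<Longrightarrow> aff_mult g h \<in> \<Gamma>"
  shows "\<exists>u. u \<noteq> 0 \<and> ((\<forall>g\<in>\<Gamma>. lin_part g u = u) \<or>
                        (\<forall>g\<in>\<Gamma>. \<forall>x. \<exists>t. lin_part g x = x + vscale u t))"
proof (cases "\<forall>g\<in>\<Gamma>. lin_part g = id")
  case True
  then have "\<forall>g\<in>\<Gamma>. lin_part g (1, 0) = (1, 0)" by simp
  moreover have "(1, 0) \<noteq> (0 :: quat \<times> quat)" by (simp add: zero_prod_def)
  ultimately show ?thesis by blast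
next
  case False
  then obtain a where "a \<in> \<Gamma>" "lin_part a \<noteq> id" by blast
  moreover obtain u where u: "u \<noteq> 0" "lin_part a u = u"
    using acts_freely_fixed_vector[OF free \<open>a \<in> \<Gamma>\<close>] by blast
  ultimately obtain y f where a: "rank_one_update a y f"
    using rank_one_update_exists by blast
  have fu: "row_apply f u = 0" using rank_one_update_fixed_iff[OF a] u by simp
  show ?thesis
  proof (cases "\<forall>g\<in>\<Gamma>. lin_part g u = u")
    case True
    with u show ?thesis by blast
  next
    case False
    then obtain b where "b \<in> \<Gamma>" "lin_part b u \<noteq> u" by blast
    then obtain z p where b: "rank_one_update b z p"
      using acts_freely_rank_one_update[OF free] by (metis id_apply)
    have pu: "row_apply p u \<noteq> 0"
      using rank_one_update_fixed_iff[OF b] \<open>lin_part b u \<noteq> u\<close> by simp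
    then have "\<nexists>\<kappa>. p = row_scale \<kappa> f" using fu by (auto simp: row_apply_row_scale)
    then obtain \<mu> where zy: "z = vscale y \<mu>"
      using acts_freely_share_kernel_or_image[OF free closed \<open>a \<in> \<Gamma>\<close> \<open>b \<in> \<Gamma>\<close> a b] by blast
    \<comment> \<open>a and b have different kernels, so no third update can share its kernel with both\<close>
    have image_y: "\<exists>\<nu>. w = vscale y \<nu>" if c: "c \<in> \<Gamma>" "rank_one_update c w r" for c w r
    proof (rule ccontr)
      assume not_y: "\<nexists>\<nu>. w = vscale y \<nu>"
      then obtain \<kappa> where "r = row_scale \<kappa> f"
        using acts_freely_share_kernel_or_image[OF free closed \<open>a \<in> \<Gamma>\<close> c(1) a c(2)] by blast
      then have "row_apply r u = 0" using fu by (simp add: row_apply_row_scale)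
      have "\<nexists>\<nu>. w = vscale z \<nu>" using not_y zy by (metis vscale_vscale)
      then obtain \<kappa>' where "r = row_scale \<kappa>' p"
        using acts_freely_share_kernel_or_image[OF free closed \<open>b \<in> \<Gamma>\<close> c(1) b c(2)] by blast
      moreover from this \<open>row_apply r u = 0\<close> pu have "\<kappa>' = 0"
        by (simp add: row_apply_row_scale)
      ultimately have "r = 0" by (simp add: row_scale_def zero_prod_def)
      with rank_one_update_nonzero(2)[OF c(2)] show False ..
    qed
    have "\<exists>t. lin_part g x = x + vscale y t" if "g \<in> \<Gamma>" for g x
    proof (cases "lin_part g = id")
      case True
      then show ?thesis by (metis id_apply add_0_right vscale_zero_right)
    next
      case False
      with free \<open>g \<in> \<Gamma>\<close> obtain w r where "rank_one_update g w r"
        by (rule acts_freely_rank_one_update)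
      with image_y \<open>g \<in> \<Gamma>\<close> show ?thesis
        by (metis rank_one_update_shift_along)
    qed
    with rank_one_update_nonzero(1)[OF a] show ?thesis by blast
  qed
qed

lemma exists_Aff2H_first_column:
  assumes "u \<noteq> 0"
  obtains P Q where "aff_mult P Q = aff_one" "aff_mult Q P = aff_one" "lin_part P (1, 0) = u"
proof (cases "fst u = 0")
  case False
  let ?P = "\<lparr> ma = fst u, mb = 0, mc = snd u, md = 1, mr = 0, ms = 0 \<rparr>"
  let ?Q = "\<lparr> ma = inverse (fst u), mb = 0, mc = - (snd u * inverse (fst u)), md = 1, mr = 0, ms = 0 \<rparr>"
  have "aff_mult ?P ?Q = aff_one" "aff_mult ?Q ?P = aff_one"
    using False by (simp_all add: aff_mult_def aff_one_def mult.assoc)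
  moreover have "lin_part ?P (1, 0) = u" by (simp add: lin_part_e1)
  ultimately show ?thesis by (rule that)
next
  case True
  with assms have "snd u \<noteq> 0" by (cases u) (simp add: zero_prod_def)
  let ?P = "\<lparr> ma = 0, mb = 1, mc = snd u, md = 0, mr = 0, ms = 0 \<rparr>"
  let ?Q = "\<lparr> ma = 0, mb = inverse (snd u), mc = 1, md = 0, mr = 0, ms = 0 \<rparr>"
  have "aff_mult ?P ?Q = aff_one" "aff_mult ?Q ?P = aff_one"
    using \<open>snd u \<noteq> 0\<close> by (simp_all add: aff_mult_def aff_one_def)
  moreover have "lin_part ?P (1, 0) = u" using True by (simp add: lin_part_e1 prod_eq_iff)
  ultimately show ?thesis by (rule that)
qed

lemma Aff2H_fixing_e1_in_G2:
  assumes "g \<in> Aff2H" "lin_part g (1, 0) = (1, 0)"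
  shows "g \<in> G2"
proof -
  have "ma g = 1" "mc g = 0" using assms(2) by (simp_all add: lin_part_e1)
  moreover have "md g \<noteq> 0"
  proof
    assume "md g = 0"
    with \<open>ma g = 1\<close> \<open>mc g = 0\<close> have "lin_part g (- mb g, 1) = 0"
      by (simp add: lin_part_def row_apply_def zero_prod_def)
    from lin_part_Aff2H_eq_0[OF assms(1) this] show False by (simp add: zero_prod_def)
  qed
  ultimately show ?thesis by (simp add: G2_def)
qed

lemma Aff2H_shift_along_e1_in_G1:
  assumes "g \<in> Aff2H" "\<And>x. \<exists>t. lin_part g x = x + vscale (1, 0) t"
  shows "g \<in> G1"
proof -
  obtain t t' where "lin_part g (1, 0) = (1, 0) + vscale (1, 0) t"
    "lin_part g (0, 1) = (0, 1) + vscale (1, 0) t'"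
    using assms(2) by blast
  then have "mc g = 0" "md g = 1" by (simp_all add: lin_part_e1 lin_part_e2 vscale_def)
  moreover have "ma g \<noteq> 0"
  proof
    assume "ma g = 0"
    with \<open>mc g = 0\<close> have "lin_part g (1, 0) = 0" by (simp add: lin_part_e1 zero_prod_def)
    from lin_part_Aff2H_eq_0[OF assms(1) this] show False by (simp add: zero_prod_def)
  qed
  ultimately show ?thesis by (simp add: G1_def)
qed

theorem mainTheorem7:
  assumes "subgroup \<Gamma> Aff2H_group"
    and "acts_freely \<Gamma>"
  shows "\<exists>h\<in>Aff2H.
           (\<lambda>g. aff_mult (aff_mult h g) (inv\<^bsub>Aff2H_group\<^esub> h)) ` \<Gamma> \<subseteq> G1 \<or>
           (\<lambda>g. aff_mult (aff_mult h g) (inv\<^bsub>Aff2H_group\<^esub> h)) ` \<Gamma> \<subseteq> G2"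
proof -
  have closed: "\<And>g h. g \<in> \<Gamma> \<Longrightarrow> h \<in> \<Gamma> \<Longrightarrow> aff_mult g h \<in> \<Gamma>" and "\<Gamma> \<subseteq> Aff2H"
    using subgroup.m_closed[OF assms(1)] subgroup.subset[OF assms(1)] by (auto simp: Aff2H_group_def)
  obtain u where u: "u \<noteq> 0" and cases: "(\<forall>g\<in>\<Gamma>. lin_part g u = u) \<or>
      (\<forall>g\<in>\<Gamma>. \<forall>x. \<exists>t. lin_part g x = x + vscale u t)"
    using acts_freely_common_fixed_vector_or_shift_line[OF assms(2) closed] by blast
  obtain P Q where PQ: "aff_mult P Q = aff_one" "aff_mult Q P = aff_one" and "lin_part P (1, 0) = u"
    using u by (rule exists_Aff2H_first_column)
  have QP_x: "lin_part Q (lin_part P x) = x" for x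
    using PQ(2) by (metis lin_part_mult lin_part_one)
  define conj where "conj g = aff_mult (aff_mult Q g) P" for g
  have conj_Aff2H: "conj g \<in> Aff2H" if "g \<in> \<Gamma>" for g
    using that \<open>\<Gamma> \<subseteq> Aff2H\<close> Aff2H_I[OF PQ] Aff2H_I[OF PQ(2,1)]
    by (auto simp: conj_def intro!: Aff2H_mult_closed)
  have lin_conj: "lin_part (conj g) x = lin_part Q (lin_part g (lin_part P x))" for g x
    by (simp add: conj_def lin_part_mult)
  from cases have "conj ` \<Gamma> \<subseteq> G1 \<or> conj ` \<Gamma> \<subseteq> G2"
  proof
    assume "\<forall>g\<in>\<Gamma>. lin_part g u = u"
    then show ?thesis
      using QP_x \<open>lin_part P (1, 0) = u\<close> by (auto simp: lin_conj intro!: Aff2H_fixing_e1_in_G2 conj_Aff2H)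
  next
    assume "\<forall>g\<in>\<Gamma>. \<forall>x. \<exists>t. lin_part g x = x + vscale u t"
    then have "\<exists>t. lin_part (conj g) x = x + vscale (1, 0) t" if "g \<in> \<Gamma>" for g x
      using that QP_x \<open>lin_part P (1, 0) = u\<close> by (metis lin_conj lin_part_add lin_part_vscale)
    then show ?thesis by (auto intro!: Aff2H_shift_along_e1_in_G1 conj_Aff2H)
  qed
  moreover have "Q \<in> Aff2H" "inv\<^bsub>Aff2H_group\<^esub> Q = P"
    using PQ by (auto intro: Aff2H_I Aff2H_inv_eqI)
  ultimately show ?thesis unfolding conj_def by blast
qed




end
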